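(* Assume $f$ has a unique global maximizer, contains no weak epistasis, and every order-1 epistasis of $f$ is strict. Then any two distinct maximal cliques of the epistatic graph are vertex-disjoint.
   Context: Fix $\ell\ge1$, loci $V=\{0,\dots,\ell-1\}$, chromosomes $\vec y\in\{0,1\}^V$, fitness $f:\{0,1\}^V\to\mathbb R$ (maximized) with unique global maximizer $g$. An assignment $A$ is a set of pairs $(v,a)$ with at most one pair per locus; coverage $\mathcal C(A)$; $A[v]$ its allele at $v$. $\Psi_A$ is the set of chromosomes agreeing with $A$ on $\mathcal C(A)$ with maximum fitness among such chromosomes; $\Psi_A[v]=\{\psi_v:\psi\in\Psi_A\}$. Epistasis: for $v\in V$ and nonempty $S\subseteq V\setminus\{v\}$, $S\Rightarrow v$ iff for every $s\in S$ there exists an assignment $A$ with $\mathcal C(A)=S$ and $\Psi_A[v]\neq\Psi_{A\setminus\{(s,A[s])\}}[v]$. An epistasis $S\Rightarrow v$ with $|S|\ge2$ is weak if no nonempty proper subset $T\subsetneq S$ has $T\Rightarrow v$. An order-1 epistasis $\{u\}\Rightarrow v$ is strict, written $u\rightarrow v$, if $\Psi_{\{(u,1-g[u])\}}[v]=\{1-g[v]\}$. The epistatic graph is the directed graph on $V$ with edge $u\to v$ iff $\{u\}\Rightarrow v$. A clique is a set of vertices $C$ with $a\rightarrow b$ for all distinct $a,b\in C$; it is maximal if it is not properly contained in another clique. *)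

theory Defs
  imports Complex_Main
begin

text \<open>Loci are 0..<l. Alleles {0,1} are encoded as bool (False = 0, True = 1),
so 1 - a is \<not> a. An assignment is a partial map nat => bool option whose
domain (the coverage) is contained in the loci; being a map enforces at most
one pair per locus.\<close>

definition chroms :: "nat \<Rightarrow> (nat \<Rightarrow> bool) set" where
  "chroms l = {y. \<forall>i. l \<le> i \<longrightarrow> \<not> y i}"

definition is_assignment :: "nat \<Rightarrow> (nat \<rightharpoonup> bool) \<Rightarrow> bool" where
  "is_assignment l A \<longleftrightarrow> dom A \<subseteq> {..<l}"

definition agree :: "nat \<Rightarrow> (nat \<rightharpoonup> bool) \<Rightarrow> (nat \<Rightarrow> bool) set" where
  "agree l A = {y \<in> chroms l. \<forall>v \<in> dom A. A v = Some (y v)}"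

definition Psi :: "nat \<Rightarrow> ((nat \<Rightarrow> bool) \<Rightarrow> real) \<Rightarrow> (nat \<rightharpoonup> bool) \<Rightarrow> (nat \<Rightarrow> bool) set" where
  "Psi l f A = {y \<in> agree l A. \<forall>z \<in> agree l A. f z \<le> f y}"

definition PsiAt :: "nat \<Rightarrow> ((nat \<Rightarrow> bool) \<Rightarrow> real) \<Rightarrow> (nat \<rightharpoonup> bool) \<Rightarrow> nat \<Rightarrow> bool set" where
  "PsiAt l f A v = (\<lambda>y. y v) ` Psi l f A"

definition unique_maximizer :: "nat \<Rightarrow> ((nat \<Rightarrow> bool) \<Rightarrow> real) \<Rightarrow> (nat \<Rightarrow> bool) \<Rightarrow> bool" where
  "unique_maximizer l f g \<longleftrightarrow> g \<in> chroms l \<and> (\<forall>y \<in> chroms l. y \<noteq> g \<longrightarrow> f y < f g)"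

definition epistasis :: "nat \<Rightarrow> ((nat \<Rightarrow> bool) \<Rightarrow> real) \<Rightarrow> nat set \<Rightarrow> nat \<Rightarrow> bool" where
  "epistasis l f S v \<longleftrightarrow> v < l \<and> S \<noteq> {} \<and> S \<subseteq> {..<l} - {v} \<and>
     (\<forall>s \<in> S. \<exists>A. is_assignment l A \<and> dom A = S \<and>
        PsiAt l f A v \<noteq> PsiAt l f (A(s := None)) v)"

definition weak_epistasis :: "nat \<Rightarrow> ((nat \<Rightarrow> bool) \<Rightarrow> real) \<Rightarrow> nat set \<Rightarrow> nat \<Rightarrow> bool" where
  "weak_epistasis l f S v \<longleftrightarrow> epistasis l f S v \<and> 2 \<le> card S \<and>
     \<not> (\<exists>T. T \<noteq> {} \<and> T \<subset> S \<and> epistasis l f T v)"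

definition strict_epi :: "nat \<Rightarrow> ((nat \<Rightarrow> bool) \<Rightarrow> real) \<Rightarrow> (nat \<Rightarrow> bool) \<Rightarrow> nat \<Rightarrow> nat \<Rightarrow> bool" where
  "strict_epi l f g u v \<longleftrightarrow> epistasis l f {u} v \<and>
     PsiAt l f [u \<mapsto> \<not> g u] v = {\<not> g v}"

definition epi_edge :: "nat \<Rightarrow> ((nat \<Rightarrow> bool) \<Rightarrow> real) \<Rightarrow> nat \<Rightarrow> nat \<Rightarrow> bool" where
  "epi_edge l f u v \<longleftrightarrow> epistasis l f {u} v"

definition clique :: "nat \<Rightarrow> ((nat \<Rightarrow> bool) \<Rightarrow> real) \<Rightarrow> (nat \<Rightarrow> bool) \<Rightarrow> nat set \<Rightarrow> bool" where
  "clique l f g C \<longleftrightarrow> C \<subseteq> {..<l} \<and>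
     (\<forall>a \<in> C. \<forall>b \<in> C. a \<noteq> b \<longrightarrow> strict_epi l f g a b)"

definition maximal_clique :: "nat \<Rightarrow> ((nat \<Rightarrow> bool) \<Rightarrow> real) \<Rightarrow> (nat \<Rightarrow> bool) \<Rightarrow> nat set \<Rightarrow> bool" where
  "maximal_clique l f g C \<longleftrightarrow> clique l f g C \<and> \<not> (\<exists>D. clique l f g D \<and> C \<subset> D)"

end

theory Submission
  imports Defs
begin

text \<open>Write \<open>\<Psi>\<^sub>u\<close> for the optima under the single assignment that flips \<open>u\<close> away from \<open>g\<close>.
Since \<open>g\<close> is the unique maximizer, \<open>u \<rightarrow> v\<close> holds exactly when every chromosome of \<open>\<Psi>\<^sub>u\<close>
also flips \<open>v\<close>. For mutually strict \<open>a \<rightarrow> c \<rightarrow> a\<close>, each of \<open>\<Psi>\<^sub>a\<close>, \<open>\<Psi>\<^sub>c\<close> lies inside the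
feasible set of the other, so both are the optima of the same value and coincide. Hence all
vertices of a clique share one optimum set; two cliques sharing a vertex \<open>c\<close> therefore share
it too, and every edge out of \<open>c\<close> transfers to every vertex of the union, which is again a
clique. Maximality then forces two intersecting maximal cliques to be equal.\<close>

lemma Psi_empty_unique_maximizer:
  assumes "unique_maximizer l f g"
  shows "Psi l f Map.empty = {g}"
proof -
  have agree_empty: "agree l Map.empty = chroms l"
    unfolding agree_def by simp
  have "g \<in> Psi l f Map.empty"
    using assms agree_empty unfolding unique_maximizer_def Psi_def
    by (auto simp: less_imp_le)
  moreover have "y = g" if "y \<in> Psi l f Map.empty" for y
    using that assms agree_empty unfolding unique_maximizer_def Psi_def
    by (metis (mono_tags, lifting) mem_Collect_eq not_le)
  ultimately show ?thesis by blast
qed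

lemma agree_singleton: "y \<in> agree l [v \<mapsto> b] \<longleftrightarrow> y \<in> chroms l \<and> y v = b"
  unfolding agree_def by auto

lemma Psi_subset_agree_if_PsiAt_singleton:
  assumes "PsiAt l f A v = {b}"
  shows "Psi l f A \<noteq> {}" and "Psi l f A \<subseteq> agree l [v \<mapsto> b]"
proof -
  show "Psi l f A \<noteq> {}"
    using assms unfolding PsiAt_def by auto
  have "Psi l f A \<subseteq> chroms l"
    unfolding Psi_def agree_def by auto
  moreover have "y v = b" if "y \<in> Psi l f A" for y
    using that assms unfolding PsiAt_def by blast
  ultimately show "Psi l f A \<subseteq> agree l [v \<mapsto> b]"
    by (auto simp: agree_singleton)
qed

lemma Psi_eq_if_mutually_feasible:
  assumes "Psi l f A \<noteq> {}" "Psi l f B \<noteq> {}"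
    and AB: "Psi l f A \<subseteq> agree l B" and BA: "Psi l f B \<subseteq> agree l A"
  shows "Psi l f A = Psi l f B"
proof -
  obtain a b where a: "a \<in> Psi l f A" and b: "b \<in> Psi l f B"
    using assms(1,2) by blast
  have "f a \<le> f b"
    using b subsetD[OF AB a] unfolding Psi_def by simp
  moreover have "f b \<le> f a"
    using a subsetD[OF BA b] unfolding Psi_def by simp
  ultimately have "Psi l f A = {y \<in> agree l A. f a \<le> f y}" "Psi l f B = {y \<in> agree l B. f b \<le> f y}"
    using a b unfolding Psi_def by (auto intro: order_trans)
  then show ?thesis
    using AB BA \<open>f a \<le> f b\<close> \<open>f b \<le> f a\<close> by auto
qed

lemma strict_epi_iff_PsiAt_flip:
  assumes "unique_maximizer l f g" "u < l" "v < l" "u \<noteq> v"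
  shows "strict_epi l f g u v \<longleftrightarrow> PsiAt l f [u \<mapsto> \<not> g u] v = {\<not> g v}"
proof
  assume flip: "PsiAt l f [u \<mapsto> \<not> g u] v = {\<not> g v}"
  have "PsiAt l f Map.empty v = {g v}"
    using Psi_empty_unique_maximizer[OF assms(1)] unfolding PsiAt_def by simp
  then have "PsiAt l f [u \<mapsto> \<not> g u] v \<noteq> PsiAt l f ([u \<mapsto> \<not> g u](u := None)) v"
    using flip by simp
  moreover have "is_assignment l [u \<mapsto> \<not> g u]" "dom [u \<mapsto> \<not> g u] = {u}"
    using assms(2) unfolding is_assignment_def by simp_all
  ultimately have "epistasis l f {u} v"
    using assms(2-4) unfolding epistasis_def by blast
  then show "strict_epi l f g u v"
    using flip unfolding strict_epi_def by simp
qed (simp add: strict_epi_def)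

lemma Psi_flip_eq_if_mutual_strict:
  assumes "strict_epi l f g a c" "strict_epi l f g c a"
  shows "Psi l f [a \<mapsto> \<not> g a] = Psi l f [c \<mapsto> \<not> g c]"
proof -
  have "PsiAt l f [a \<mapsto> \<not> g a] c = {\<not> g c}" "PsiAt l f [c \<mapsto> \<not> g c] a = {\<not> g a}"
    using assms unfolding strict_epi_def by simp_all
  then show ?thesis
    by (intro Psi_eq_if_mutually_feasible) (auto dest: Psi_subset_agree_if_PsiAt_singleton)
qed

lemma clique_Un:
  assumes um: "unique_maximizer l f g"
    and C1: "clique l f g C1" and C2: "clique l f g C2" and c: "c \<in> C1" "c \<in> C2"
  shows "clique l f g (C1 \<union> C2)"
proof -
  let ?C = "C1 \<union> C2"
  have C_loci: "?C \<subseteq> {..<l}"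
    using C1 C2 unfolding clique_def by auto
  have edge_c: "strict_epi l f g c x \<and> strict_epi l f g x c" if "x \<in> ?C" "x \<noteq> c" for x
    using that C1 C2 c unfolding clique_def by auto
  have flip: "PsiAt l f [a \<mapsto> \<not> g a] b = {\<not> g b}" if ab: "a \<in> ?C" "b \<in> ?C" "a \<noteq> b" for a b
  proof (cases "b = c")
    case True
    then show ?thesis
      using edge_c[of a] ab unfolding strict_epi_def by simp
  next
    case False
    have "Psi l f [a \<mapsto> \<not> g a] = Psi l f [c \<mapsto> \<not> g c]"
    proof (cases "a = c")
      case False
      then show ?thesis
        using Psi_flip_eq_if_mutual_strict edge_c[OF ab(1)] by blast
    qed simp
    moreover have "PsiAt l f [c \<mapsto> \<not> g c] b = {\<not> g b}"
      using edge_c[OF ab(2) False] unfolding strict_epi_def by simp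
    ultimately show ?thesis
      unfolding PsiAt_def by simp
  qed
  show ?thesis
    unfolding clique_def
  proof (intro conjI ballI impI)
    fix a b assume ab: "a \<in> ?C" "b \<in> ?C" "a \<noteq> b"
    then have "a < l" "b < l"
      using C_loci by auto
    then show "strict_epi l f g a b"
      using strict_epi_iff_PsiAt_flip[OF um _ _ ab(3)] flip[OF ab] by simp
  qed (rule C_loci)
qed

lemma maximal_clique_superset_eq:
  assumes "maximal_clique l f g C" "clique l f g D" "C \<subseteq> D"
  shows "D = C"
  using assms unfolding maximal_clique_def by blast

theorem corollary6:
  fixes l :: nat and f :: "(nat \<Rightarrow> bool) \<Rightarrow> real" and g :: "nat \<Rightarrow> bool"
    and C1 C2 :: "nat set"
  assumes "1 \<le> l"
    and "unique_maximizer l f g"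
    and "\<forall>S v. \<not> weak_epistasis l f S v"
    and "\<forall>u v. epi_edge l f u v \<longrightarrow> strict_epi l f g u v"
    and "maximal_clique l f g C1" and "maximal_clique l f g C2"
    and "C1 \<noteq> C2"
  shows "C1 \<inter> C2 = {}"
proof (rule ccontr)
  assume "C1 \<inter> C2 \<noteq> {}"
  then obtain c where "c \<in> C1" "c \<in> C2" by blast
  then have "clique l f g (C1 \<union> C2)"
    using clique_Un[OF assms(2)] assms(5,6) unfolding maximal_clique_def by simp
  then have "C1 \<union> C2 = C1" "C1 \<union> C2 = C2"
    using maximal_clique_superset_eq assms(5,6) by simp_all
  then show False
    using assms(7) by simp
qed

end
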